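(* Let $(X_n)_{n\in\mathbb{Z}}$ be i.i.d. real random variables with $\mathbb{P}(X_1<0)>0$, and let $(Y_n)_{n\in\mathbb{Z}}$ be i.i.d., independent of $(X_n)$, with $\mathbb{P}(Y_1=1)=p=1-\mathbb{P}(Y_1=-1)$, where $p\in[0,1)$. Let $W$ denote the stationary distribution of the recursion $W_{n+1}=(Y_nW_n+X_n)^+$, i.e. $W\stackrel{D}{=}(YW+X)^+$ with $W,Y,X$ independent, $Y\stackrel{D}{=}Y_1$, $X\stackrel{D}{=}X_1$. Let $S_0=0$, $S_i=X_1+\dots+X_i$, $T_n=\max_{0\le i\le n}S_i$, let $N$ be independent of $(X_n)$ with $\mathbb{P}(N=k)=(1-p)p^k$, $k\ge 0$, and $K=N+1$. Then $W\le T_K$ in distribution (i.e. $\mathbb{P}(W>x)\le\mathbb{P}(T_K>x)$ for all $x$), and $W\ge T_K-W'$ in distribution, where $W'$ is a copy of $W$ independent of $T_K$.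
   Context: Under these assumptions a stationary version of the recursion exists. $x^+=\max\{x,0\}$. *)

theory Defs
  imports "HOL-Probability.Probability"
begin

definition psum :: "(nat \<Rightarrow> 'a \<Rightarrow> real) \<Rightarrow> nat \<Rightarrow> 'a \<Rightarrow> real" where
  "psum X i \<omega> = (\<Sum>j\<in>{1..i}. X j \<omega>)"

definition runmax :: "(nat \<Rightarrow> 'a \<Rightarrow> real) \<Rightarrow> nat \<Rightarrow> 'a \<Rightarrow> real" where
  "runmax X n \<omega> = Max ((\<lambda>i. psum X i \<omega>) ` {0..n})"

text \<open>Y is encoded by a Bernoulli(p) boolean b (b = True iff Y = 1).\<close>
definition stationary_dist :: "real measure \<Rightarrow> real \<Rightarrow> real measure \<Rightarrow> bool" where
  "stationary_dist \<mu> p W \<longleftrightarrow>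
     prob_space W \<and> sets W = sets borel \<and>
     W = distr (W \<Otimes>\<^sub>M (measure_pmf (bernoulli_pmf p) \<Otimes>\<^sub>M \<mu>)) borel
            (\<lambda>(w, b, x). max ((if b then w else - w) + x) 0)"

end

theory Submission
  imports Defs
begin

text \<open>
  Let \<open>s\<^sub>W\<close>, \<open>s\<^sub>T\<close> and \<open>s\<^sub>D\<close> be the tail functions \<open>x \<mapsto> P(\<cdot> > x)\<close> of \<open>W\<close>,
  of \<open>T\<^sub>K\<close> and of \<open>T\<^sub>K - W'\<close>. On \<open>[0, \<infinity>)\<close> each of them solves a renewal-type equation
  \<open>s x = p \<integral> s (x - y) d\<mu>(y) + (1 - p) g x\<close>.
  For \<open>s\<^sub>W\<close> this comes from splitting on \<open>Y\<close>, with \<open>g x = P(X > x + W)\<close>.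
  For \<open>s\<^sub>T\<close> the forcing term is \<open>g x = P(X > x)\<close>: the running maximum satisfies the
  Lindley recursion \<open>T(n + 1) = max 0 (X + T'(n))\<close>, so each extra step convolves its tail with
  \<open>\<mu>\<close>, and the geometric weights of \<open>K\<close> turn this into a single equation.
  Integrating the equation for \<open>s\<^sub>T\<close> against the law of the independent \<open>W'\<close> shows that
  \<open>s\<^sub>D\<close> solves the equation with the same forcing term as \<open>s\<^sub>W\<close>.
  Finally \<open>s\<^sub>W\<close> and \<open>s\<^sub>T\<close> equal 1 on \<open>(-\<infinity>, 0)\<close>, \<open>P(X > x + W) \<le> P(X > x)\<close>, and
  \<open>f \<mapsto> p \<integral> f (\<cdot> - y) d\<mu>(y)\<close> contracts the supremum norm by the factor \<open>p < 1\<close>;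
  a maximum principle for the equation then gives \<open>s\<^sub>W \<le> s\<^sub>T\<close> and \<open>s\<^sub>D \<le> s\<^sub>W\<close>.
\<close>

lemma (in prob_space) integrable_bounded:
  fixes f :: "'a \<Rightarrow> real"
  assumes "f \<in> borel_measurable M" and "\<And>x. \<bar>f x\<bar> \<le> B"
  shows "integrable M f"
  using assms by (intro integrable_const_bound[where B = B]) auto

lemma Fubini_integral_bounded:
  fixes F :: "'a \<Rightarrow> 'b \<Rightarrow> real"
  assumes A: "prob_space A" and B: "prob_space B"
    and F: "case_prod F \<in> borel_measurable (A \<Otimes>\<^sub>M B)" and bound: "\<And>a b. \<bar>F a b\<bar> \<le> C"
  shows "integrable A (\<lambda>a. \<integral>b. F a b \<partial>B)"
    and "(\<integral>a. (\<integral>b. F a b \<partial>B) \<partial>A) = (\<integral>b. (\<integral>a. F a b \<partial>A) \<partial>B)"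
proof -
  interpret A: prob_space A by fact
  interpret B: prob_space B by fact
  interpret pair_prob_space A B ..
  have F_int: "integrable (A \<Otimes>\<^sub>M B) (case_prod F)"
    using F bound by (intro prob_space.integrable_bounded[OF prob_space_pair[OF A B]]) auto
  show "integrable A (\<lambda>a. \<integral>b. F a b \<partial>B)"
    using integrable_fst'[OF F_int] by simp
  show "(\<integral>a. (\<integral>b. F a b \<partial>B) \<partial>A) = (\<integral>b. (\<integral>a. F a b \<partial>A) \<partial>B)"
    using Fubini_integral[OF F_int] by simp
qed

lemma borel_measurable_sets_eq_borel:
  assumes "sets M = sets borel" and "f \<in> borel_measurable borel"
  shows "f \<in> borel_measurable M"
  using assms(2) unfolding measurable_cong_sets[OF assms(1) refl] .

lemma integral_indicator_Ioi_translate: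
  fixes \<nu> :: "real measure"
  assumes "sets \<nu> = sets borel"
  shows "(\<integral>t. indicator {x<..} (t + c) \<partial>\<nu>) = measure \<nu> {x - c<..}"
proof -
  have "(\<lambda>t. indicator {x<..} (t + c) :: real) = indicator {x - c<..}"
    by (auto simp: indicator_def fun_eq_iff algebra_simps)
  then show ?thesis
    using sets_eq_imp_space_eq[OF assms] by simp
qed

lemma indicator_Ioi_max_0:
  fixes x t :: real
  assumes "0 \<le> x"
  shows "indicator {x<..} (max t 0) = (indicator {x<..} t :: real)"
  using assms by (auto simp: indicator_def max_def)

lemma borel_measurable_measure_Ioi:
  fixes \<nu> :: "real measure"
  assumes "prob_space \<nu>" and "sets \<nu> = sets borel"
  shows "(\<lambda>x. measure \<nu> {x<..}) \<in> borel_measurable borel"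
proof -
  interpret prob_space \<nu> by fact
  have "mono (\<lambda>x. - measure \<nu> {x<..})"
    by (rule monoI) (auto intro!: finite_measure_mono simp: assms(2))
  then have "(\<lambda>x. - (- measure \<nu> {x<..})) \<in> borel_measurable borel"
    by (intro borel_measurable_uminus borel_measurable_mono)
  then show ?thesis by simp
qed

lemma measure_Ioi_eq_1_if_AE_nonneg:
  fixes \<nu> :: "real measure"
  assumes "prob_space \<nu>" and "sets \<nu> = sets borel" and "AE t in \<nu>. 0 \<le> t" and "x < 0"
  shows "measure \<nu> {x<..} = 1"
proof -
  interpret prob_space \<nu> by fact
  have "AE t in \<nu>. x < t"
    using assms(3,4) by (auto elim: eventually_mono)
  moreover have "{x<..} = {t \<in> space \<nu>. x < t}"
    using sets_eq_imp_space_eq[OF assms(2)] by auto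
  ultimately show ?thesis
    using prob_Collect_eq_1[of "\<lambda>t. x < t"] assms(2) by simp
qed

lemma measure_distr_Ioi:
  fixes f :: "'a \<Rightarrow> real"
  assumes "f \<in> borel_measurable M"
  shows "measure (distr M borel f) {x<..} = measure M {\<omega> \<in> space M. x < f \<omega>}"
  using assms by (subst measure_distr) (auto simp: vimage_def Int_def conj_commute)

lemma integrable_measure_Ioi_translate:
  fixes \<mu> W :: "real measure"
  assumes "prob_space W" "sets W = sets borel" "prob_space \<mu>" "sets \<mu> = sets borel"
  shows "integrable W (\<lambda>w. measure \<mu> {x + w<..})"
proof (rule prob_space.integrable_bounded[OF assms(1), where B = 1])
  have "(\<lambda>w. measure \<mu> {x + w<..}) \<in> borel_measurable borel"
    using borel_measurable_measure_Ioi[OF assms(3,4)] by measurable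
  then show "(\<lambda>w. measure \<mu> {x + w<..}) \<in> borel_measurable W"
    by (rule borel_measurable_sets_eq_borel[OF assms(2)])
qed (simp add: prob_space.prob_le_1[OF assms(3)])

lemma integrable_bounded_translate:
  fixes \<mu> :: "real measure" and h :: "real \<Rightarrow> real"
  assumes "prob_space \<mu>" "sets \<mu> = sets borel"
    and "h \<in> borel_measurable borel" "\<And>x. \<bar>h x\<bar> \<le> B"
  shows "integrable \<mu> (\<lambda>y. h (z - y))"
proof (rule prob_space.integrable_bounded[OF assms(1)])
  have "(\<lambda>y. h (z - y)) \<in> borel_measurable borel"
    using assms(3) by measurable
  then show "(\<lambda>y. h (z - y)) \<in> borel_measurable \<mu>"
    by (rule borel_measurable_sets_eq_borel[OF assms(2)])
qed (fact assms(4))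

lemma (in prob_space) sums_integral_dominated:
  fixes f :: "nat \<Rightarrow> 'a \<Rightarrow> real"
  assumes f: "\<And>k. integrable M (f k)" and bound: "\<And>k x. \<bar>f k x\<bar> \<le> b k"
    and b: "summable b" and g: "\<And>x. (\<lambda>k. f k x) sums g x"
  shows "(\<lambda>k. \<integral>x. f k x \<partial>M) sums (\<integral>x. g x \<partial>M)"
proof -
  have "(\<lambda>k. \<integral>x. f k x \<partial>M) sums (\<integral>x. (\<Sum>k. f k x) \<partial>M)"
  proof (rule sums_integral[OF f])
    show "AE x in M. summable (\<lambda>k. norm (f k x))"
      using bound by (intro AE_I2 summable_comparison_test'[OF b]) auto
    show "summable (\<lambda>k. \<integral>x. norm (f k x) \<partial>M)"
    proof (rule summable_comparison_test'[OF b])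
      fix k
      have "(\<integral>x. \<bar>f k x\<bar> \<partial>M) \<le> (\<integral>x. b k \<partial>M)"
        using f bound by (intro integral_mono) auto
      then show "norm (\<integral>x. norm (f k x) \<partial>M) \<le> b k"
        by (simp add: prob_space)
    qed
  qed
  moreover have "(\<Sum>k. f k x) = g x" for x
    using g by (simp add: sums_iff)
  ultimately show ?thesis
    by simp
qed

lemma renewal_comparison:
  fixes f g :: "real \<Rightarrow> real" and \<mu> :: "real measure"
  assumes \<mu>: "prob_space \<mu>" "sets \<mu> = sets borel" and p: "0 \<le> p" "p < 1"
    and meas: "f \<in> borel_measurable borel" "g \<in> borel_measurable borel"
    and bound: "\<And>x. \<bar>f x\<bar> \<le> B" "\<And>x. \<bar>g x\<bar> \<le> B"
    and neg: "\<And>x. x < 0 \<Longrightarrow> f x \<le> g x"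
    and nonneg: "\<And>x. 0 \<le> x \<Longrightarrow>
      f x - p * (\<integral>y. f (x - y) \<partial>\<mu>) \<le> g x - p * (\<integral>y. g (x - y) \<partial>\<mu>)"
  shows "f x \<le> g x"
proof -
  interpret prob_space \<mu> by fact
  define D where "D = (SUP z. max 0 (f z - g z))"
  have "max 0 (f z - g z) \<le> 2 * B" for z
    using bound(1)[of z] bound(2)[of z] by (auto simp: abs_le_iff max_def)
  then have bdd: "bdd_above (range (\<lambda>z. max 0 (f z - g z)))"
    by (intro bdd_aboveI[where M = "2 * B"]) auto
  have le_D: "max 0 (f z - g z) \<le> D" for z
    unfolding D_def by (rule cSUP_upper[OF _ bdd]) simp
  have f_int: "integrable \<mu> (\<lambda>y. f (z - y))" and g_int: "integrable \<mu> (\<lambda>y. g (z - y))" for z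
    using integrable_bounded_translate[OF \<mu> meas(1) bound(1)]
      integrable_bounded_translate[OF \<mu> meas(2) bound(2)] by auto
  \<comment> \<open>\<open>D\<close> is the supremum of \<open>(f - g)\<^sup>+\<close>; the hypotheses give \<open>D \<le> p * D\<close>.\<close>
  have contract: "f z - g z \<le> p * D" for z
  proof (cases "z < 0")
    case True
    moreover have "0 \<le> p * D" using le_D[of 0] p by simp
    ultimately show ?thesis using neg[of z] by simp
  next
    case False
    have "(\<integral>y. f (z - y) \<partial>\<mu>) - (\<integral>y. g (z - y) \<partial>\<mu>) = (\<integral>y. f (z - y) - g (z - y) \<partial>\<mu>)"
      using f_int g_int by simp
    also have "\<dots> \<le> (\<integral>y. D \<partial>\<mu>)"
      using f_int g_int le_D
      by (intro integral_mono) (auto intro: order_trans[OF max.cobounded2])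
    finally have "(\<integral>y. f (z - y) \<partial>\<mu>) - (\<integral>y. g (z - y) \<partial>\<mu>) \<le> D"
      by (simp add: prob_space)
    then have "p * ((\<integral>y. f (z - y) \<partial>\<mu>) - (\<integral>y. g (z - y) \<partial>\<mu>)) \<le> p * D"
      using p by (intro mult_left_mono) auto
    then show ?thesis
      using nonneg[of z] False by (simp add: right_diff_distrib)
  qed
  have "D \<le> p * D"
    unfolding D_def using contract p le_D[of 0]
    by (intro cSUP_least) (auto simp: D_def)
  then have "D \<le> 0"
    using p by (simp add: mult_le_cancel_right1 not_le)
  then show ?thesis
    using contract[of x] le_D[of x] p by (simp add: mult_le_0_iff)
qed

lemma measure_Ioi_le_by_renewal_comparison:
  fixes \<mu> \<nu> \<rho> :: "real measure"
  assumes \<mu>: "prob_space \<mu>" "sets \<mu> = sets borel" and p: "0 \<le> p" "p < 1"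
    and \<nu>: "prob_space \<nu>" "sets \<nu> = sets borel"
    and \<rho>: "prob_space \<rho>" "sets \<rho> = sets borel" "AE t in \<rho>. 0 \<le> t"
    and nonneg: "\<And>x. 0 \<le> x \<Longrightarrow>
      measure \<nu> {x<..} - p * (\<integral>y. measure \<nu> {x - y<..} \<partial>\<mu>)
        \<le> measure \<rho> {x<..} - p * (\<integral>y. measure \<rho> {x - y<..} \<partial>\<mu>)"
  shows "measure \<nu> {x<..} \<le> measure \<rho> {x<..}"
proof (rule renewal_comparison[OF \<mu> p, where B = 1
    and f = "\<lambda>x. measure \<nu> {x<..}" and g = "\<lambda>x. measure \<rho> {x<..}"])
  show "(\<lambda>x. measure \<nu> {x<..}) \<in> borel_measurable borel"
    and "(\<lambda>x. measure \<rho> {x<..}) \<in> borel_measurable borel"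
    using borel_measurable_measure_Ioi \<nu> \<rho> by blast+
  show "\<bar>measure \<nu> {x<..}\<bar> \<le> 1" "\<bar>measure \<rho> {x<..}\<bar> \<le> 1" for x
    using prob_space.prob_le_1[OF \<nu>(1)] prob_space.prob_le_1[OF \<rho>(1)] by auto
  show "measure \<nu> {x<..} \<le> measure \<rho> {x<..}" if "x < 0" for x
    using measure_Ioi_eq_1_if_AE_nonneg[OF \<rho> that] prob_space.prob_le_1[OF \<nu>(1)] by simp
qed (fact nonneg)

lemma geometric_mixture_renewal_equation:
  fixes \<mu> :: "real measure" and a :: "nat \<Rightarrow> real \<Rightarrow> real" and s :: "real \<Rightarrow> real"
  assumes \<mu>: "prob_space \<mu>" "sets \<mu> = sets borel" and p: "0 \<le> p" "p < 1"
    and a_meas: "\<And>k. a k \<in> borel_measurable borel" and a_bound: "\<And>k z. \<bar>a k z\<bar> \<le> 1"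
    and a_Suc: "\<And>k x. 0 \<le> x \<Longrightarrow> a (Suc k) x = (\<integral>y. a k (x - y) \<partial>\<mu>)"
    and s: "\<And>z. (\<lambda>k. (1 - p) * p ^ k * a (Suc k) z) sums s z"
    and x: "0 \<le> x"
  shows "s x = p * (\<integral>y. s (x - y) \<partial>\<mu>) + (1 - p) * a 1 x"
proof -
  interpret prob_space \<mu> by fact
  define c where "c z k = (1 - p) * p ^ k * a (Suc k) z" for z k
  have c_sums: "c z sums s z" for z
    unfolding c_def by (rule s)
  have weight: "0 \<le> (1 - p) * p ^ k" "(1 - p) * p ^ k \<le> 1" for k :: nat
    using p by (auto intro!: mult_le_one power_le_one)
  have c_bound: "\<bar>c z k\<bar> \<le> (1 - p) * p ^ k" for z k
  proof -
    have "\<bar>c z k\<bar> = (1 - p) * p ^ k * \<bar>a (Suc k) z\<bar>"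
      by (simp only: c_def abs_mult[of "(1 - p) * p ^ k"] abs_of_nonneg[OF weight(1)])
    also have "\<dots> \<le> (1 - p) * p ^ k"
      using a_bound weight(1)[of k] by (intro mult_left_le) auto
    finally show ?thesis .
  qed
  have c_int: "integrable \<mu> (\<lambda>y. c (x - y) k)" for k
  proof (rule integrable_bounded_translate[OF \<mu>, where h = "\<lambda>z. c z k" and B = 1])
    show "(\<lambda>z. c z k) \<in> borel_measurable borel"
      unfolding c_def using a_meas[of "Suc k"] by measurable
    show "\<bar>c z k\<bar> \<le> 1" for z
      using c_bound[of z k] weight[of k] by linarith
  qed
  have geometric: "summable (\<lambda>k. (1 - p) * p ^ k)"
    using p by (intro summable_mult summable_geometric) auto
  have series: "(\<lambda>k. \<integral>y. c (x - y) k \<partial>\<mu>) sums (\<integral>y. s (x - y) \<partial>\<mu>)"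
    by (rule sums_integral_dominated[where f = "\<lambda>k y. c (x - y) k", OF c_int c_bound geometric c_sums])
  have c_Suc: "c x (Suc k) = p * (\<integral>y. c (x - y) k \<partial>\<mu>)" for k
    using a_Suc[OF x, of "Suc k"] by (simp add: c_def)
  have "(\<lambda>k. c x (Suc k)) sums (p * (\<integral>y. s (x - y) \<partial>\<mu>))"
    unfolding c_Suc by (rule sums_mult[OF series])
  moreover have "(\<lambda>k. c x (Suc k)) sums (s x - c x 0)"
    using c_sums[of x] by (subst sums_Suc_iff) simp
  ultimately have "s x - c x 0 = p * (\<integral>y. s (x - y) \<partial>\<mu>)"
    by (rule sums_unique2[symmetric])
  then show ?thesis
    by (simp add: c_def)
qed

lemma mixture_renewal_equation:
  fixes \<mu> V W U :: "real measure"
  assumes \<mu>: "prob_space \<mu>" "sets \<mu> = sets borel"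
    and V: "prob_space V" "sets V = sets borel"
    and W: "prob_space W" "sets W = sets borel" "AE w in W. 0 \<le> w"
    and V_eq: "\<And>x. 0 \<le> x \<Longrightarrow>
      measure V {x<..} = p * (\<integral>y. measure V {x - y<..} \<partial>\<mu>) + (1 - p) * measure \<mu> {x<..}"
    and U_tail: "\<And>x. measure U {x<..} = (\<integral>w. measure V {x + w<..} \<partial>W)"
    and x: "0 \<le> x"
  shows "measure U {x<..} =
    p * (\<integral>y. measure U {x - y<..} \<partial>\<mu>) + (1 - p) * (\<integral>w. measure \<mu> {x + w<..} \<partial>W)"
proof -
  interpret W: prob_space W by fact
  let ?V = "\<lambda>z. measure V {z<..}"
  have V_meas: "?V \<in> borel_measurable borel"
    by (rule borel_measurable_measure_Ioi[OF V])
  have pair_sets: "sets (W \<Otimes>\<^sub>M \<mu>) = sets (borel \<Otimes>\<^sub>M borel)"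
    using W(2) \<mu>(2) by (intro sets_pair_measure_cong)
  have F_meas: "(\<lambda>(w, y). ?V (x - y + w)) \<in> borel_measurable (W \<Otimes>\<^sub>M \<mu>)"
    unfolding measurable_cong_sets[OF pair_sets refl] using V_meas by measurable
  have F_bound: "\<bar>?V z\<bar> \<le> 1" for z
    using prob_space.prob_le_1[OF V(1)] by simp
  have \<mu>_tail_int: "integrable W (\<lambda>w. measure \<mu> {x + w<..})"
    by (rule integrable_measure_Ioi_translate[OF W(1,2) \<mu>])
  note inner_int = Fubini_integral_bounded(1)[OF W(1) \<mu>(1) F_meas F_bound]
  have "measure U {x<..} = (\<integral>w. ?V (x + w) \<partial>W)"
    by (rule U_tail)
  also have "\<dots> = (\<integral>w. p * (\<integral>y. ?V (x - y + w) \<partial>\<mu>) + (1 - p) * measure \<mu> {x + w<..} \<partial>W)"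
  proof (rule integral_cong_AE)
    have "(\<lambda>w. ?V (x + w)) \<in> borel_measurable borel"
      using V_meas by measurable
    then show "(\<lambda>w. ?V (x + w)) \<in> borel_measurable W"
      by (rule borel_measurable_sets_eq_borel[OF W(2)])
    show "(\<lambda>w. p * (\<integral>y. ?V (x - y + w) \<partial>\<mu>) + (1 - p) * measure \<mu> {x + w<..}) \<in> borel_measurable W"
      using borel_measurable_integrable[OF inner_int] borel_measurable_integrable[OF \<mu>_tail_int]
      by measurable
    show "AE w in W. ?V (x + w) = p * (\<integral>y. ?V (x - y + w) \<partial>\<mu>) + (1 - p) * measure \<mu> {x + w<..}"
      using W(3)
    proof eventually_elim
      case (elim w)
      then show ?case
        using V_eq[of "x + w"] x by (simp add: algebra_simps)
    qed
  qed
  also have "\<dots> = p * (\<integral>w. (\<integral>y. ?V (x - y + w) \<partial>\<mu>) \<partial>W) + (1 - p) * (\<integral>w. measure \<mu> {x + w<..} \<partial>W)"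
    using inner_int \<mu>_tail_int by simp
  also have "(\<integral>w. (\<integral>y. ?V (x - y + w) \<partial>\<mu>) \<partial>W) = (\<integral>y. (\<integral>w. ?V (x - y + w) \<partial>W) \<partial>\<mu>)"
    by (rule Fubini_integral_bounded(2)[OF W(1) \<mu>(1) F_meas F_bound])
  also have "\<dots> = (\<integral>y. measure U {x - y<..} \<partial>\<mu>)"
    by (simp add: U_tail)
  finally show ?thesis .
qed

lemma (in prob_space) measure_Ioi_diff_indep:
  fixes T S :: "'a \<Rightarrow> real"
  assumes indep: "indep_var borel T borel S"
  shows "measure (distr M borel (\<lambda>\<omega>. T \<omega> - S \<omega>)) {x<..}
    = (\<integral>s. measure (distr M borel T) {x + s<..} \<partial>distr M borel S)"
proof -
  let ?V = "distr M borel T" and ?S = "distr M borel S"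
  let ?I = "indicator {x<..} :: real \<Rightarrow> real"
  have T: "T \<in> borel_measurable M" and S: "S \<in> borel_measurable M"
    using indep_var_rv1[OF indep] indep_var_rv2[OF indep] .
  have joint: "distr M (borel \<Otimes>\<^sub>M borel) (\<lambda>\<omega>. (T \<omega>, S \<omega>)) = ?V \<Otimes>\<^sub>M ?S"
    using indep by (simp add: indep_var_distribution_eq)
  interpret V: prob_space ?V by (rule prob_space_distr[OF T])
  interpret S: prob_space ?S by (rule prob_space_distr[OF S])
  interpret pair_prob_space ?V ?S ..
  have diff_meas: "(\<lambda>(t, s). ?I (t - s)) \<in> borel_measurable (borel \<Otimes>\<^sub>M borel)"
    by measurable
  have "measure (distr M borel (\<lambda>\<omega>. T \<omega> - S \<omega>)) {x<..}
      = (\<integral>t. ?I t \<partial>distr M borel (\<lambda>\<omega>. T \<omega> - S \<omega>))"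
    using integral_indicator_Ioi_translate[of "distr M borel (\<lambda>\<omega>. T \<omega> - S \<omega>)" x 0] by simp
  also have "\<dots> = (\<integral>\<omega>. ?I (T \<omega> - S \<omega>) \<partial>M)"
    using T S by (intro integral_distr) auto
  also have "\<dots> = (\<integral>z. (case z of (t, s) \<Rightarrow> ?I (t - s)) \<partial>distr M (borel \<Otimes>\<^sub>M borel) (\<lambda>\<omega>. (T \<omega>, S \<omega>)))"
    using T S diff_meas by (subst integral_distr) auto
  also have "\<dots> = (\<integral>s. (\<integral>t. ?I (t - s) \<partial>?V) \<partial>?S)"
    unfolding joint using diff_meas
    by (intro integral_snd[symmetric] prob_space.integrable_bounded[OF prob_space_pair])
       (auto intro: V.prob_space_axioms S.prob_space_axioms simp: measurable_cong_sets[OF sets_pair_measure_cong[OF sets_distr sets_distr] refl])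
  also have "\<dots> = (\<integral>s. measure ?V {x + s<..} \<partial>?S)"
  proof -
    have "(\<integral>t. ?I (t - s) \<partial>?V) = measure ?V {x + s<..}" for s
      using integral_indicator_Ioi_translate[of ?V x "- s"] by simp
    then show ?thesis by simp
  qed
  finally show ?thesis .
qed

lemma stationary_distD:
  assumes "stationary_dist \<mu> p W"
  shows "prob_space W" and "sets W = sets borel"
  using assms by (auto simp: stationary_dist_def)

lemma measurable_stationary_map:
  assumes "sets W = sets borel" and "sets \<mu> = sets borel"
  shows "(\<lambda>(w, b, y). max ((if b then w else - w) + y) 0 :: real)
    \<in> borel_measurable (W \<Otimes>\<^sub>M (measure_pmf (bernoulli_pmf p) \<Otimes>\<^sub>M \<mu>))"
proof -
  have sets_eq: "sets (W \<Otimes>\<^sub>M (measure_pmf (bernoulli_pmf p) \<Otimes>\<^sub>M \<mu>))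
      = sets (borel \<Otimes>\<^sub>M (count_space UNIV \<Otimes>\<^sub>M borel))"
    using assms by (intro sets_pair_measure_cong) simp_all
  show ?thesis
    unfolding measurable_cong_sets[OF sets_eq refl] by measurable
qed

lemma stationary_dist_AE_nonneg:
  assumes "sets \<mu> = sets borel" and "stationary_dist \<mu> p W"
  shows "AE w in W. 0 \<le> w"
proof -
  let ?P = "W \<Otimes>\<^sub>M (measure_pmf (bernoulli_pmf p) \<Otimes>\<^sub>M \<mu>)"
  let ?h = "\<lambda>(w, b, y). max ((if b then w else - w) + y) 0 :: real"
  have W_eq: "W = distr ?P borel ?h"
    using assms(2) by (simp add: stationary_dist_def)
  have "?h \<in> borel_measurable ?P"
    by (rule measurable_stationary_map[OF stationary_distD(2)[OF assms(2)] assms(1)])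
  moreover have "AE z in ?P. 0 \<le> ?h z" by auto
  ultimately have "AE w in distr ?P borel ?h. 0 \<le> w"
    by (subst AE_distr_iff) auto
  then show ?thesis by (simp only: W_eq[symmetric])
qed

lemma stationary_dist_tail_eq_integral:
  fixes \<mu> W :: "real measure"
  assumes \<mu>: "prob_space \<mu>" "sets \<mu> = sets borel" and p: "0 \<le> p" "p \<le> 1"
    and W: "stationary_dist \<mu> p W" and x: "0 \<le> x"
  shows "measure W {x<..} =
    (\<integral>w. p * (\<integral>y. indicator {x<..} (y + w) \<partial>\<mu>) + (1 - p) * measure \<mu> {x + w<..} \<partial>W)"
proof -
  \<comment> \<open>\<open>Y = 1\<close> gives the event \<open>W + X > x\<close>, \<open>Y = -1\<close> the event \<open>X > x + W\<close>.\<close>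
  let ?B = "measure_pmf (bernoulli_pmf p)"
  let ?h = "\<lambda>(w, b, y). max ((if b then w else - w) + y) 0 :: real"
  let ?I = "indicator {x<..} :: real \<Rightarrow> real"
  have W_eq: "W = distr (W \<Otimes>\<^sub>M (?B \<Otimes>\<^sub>M \<mu>)) borel ?h"
    using W by (simp add: stationary_dist_def)
  interpret W: prob_space W by (rule stationary_distD[OF W])
  interpret mu: prob_space \<mu> by fact
  interpret B\<mu>: pair_prob_space ?B \<mu> ..
  interpret B\<mu>: prob_space "?B \<Otimes>\<^sub>M \<mu>" by (rule prob_space_pair) unfold_locales
  interpret pair_prob_space W "?B \<Otimes>\<^sub>M \<mu>" ..
  have h_meas: "?h \<in> borel_measurable (W \<Otimes>\<^sub>M (?B \<Otimes>\<^sub>M \<mu>))"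
    by (rule measurable_stationary_map[OF stationary_distD(2)[OF W] \<mu>(2)])
  have "measure W {x<..} = (\<integral>t. ?I t \<partial>W)"
    using integral_indicator_Ioi_translate[OF stationary_distD(2)[OF W], of x 0] by simp
  also have "\<dots> = (\<integral>t. ?I t \<partial>distr (W \<Otimes>\<^sub>M (?B \<Otimes>\<^sub>M \<mu>)) borel ?h)"
    by (simp only: W_eq[symmetric])
  also have "\<dots> = (\<integral>z. ?I (?h z) \<partial>(W \<Otimes>\<^sub>M (?B \<Otimes>\<^sub>M \<mu>)))"
    using h_meas by (intro integral_distr) auto
  also have "\<dots> = (\<integral>w. (\<integral>q. ?I (?h (w, q)) \<partial>(?B \<Otimes>\<^sub>M \<mu>)) \<partial>W)"
    using h_meas
    by (intro integral_fst'[symmetric] prob_space.integrable_bounded[OF prob_space_axioms]) auto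
  also have "\<dots> = (\<integral>w. p * (\<integral>y. ?I (y + w) \<partial>\<mu>) + (1 - p) * measure \<mu> {x + w<..} \<partial>W)"
  proof (intro Bochner_Integration.integral_cong refl)
    fix w assume "w \<in> space W"
    then have "(\<lambda>q. ?I (?h (w, q))) \<in> borel_measurable (?B \<Otimes>\<^sub>M \<mu>)"
      using h_meas by measurable
    then have "(\<integral>q. ?I (?h (w, q)) \<partial>(?B \<Otimes>\<^sub>M \<mu>)) = (\<integral>b. (\<integral>y. ?I (?h (w, b, y)) \<partial>\<mu>) \<partial>?B)"
      by (intro B\<mu>.integral_fst'[symmetric] B\<mu>.integrable_bounded) auto
    also have "\<dots> = (\<integral>y. ?I (w + y) \<partial>\<mu>) * p + (\<integral>y. ?I (- w + y) \<partial>\<mu>) * (1 - p)"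
      using p by (simp add: indicator_Ioi_max_0[OF x])
    also have "\<dots> = p * (\<integral>y. ?I (y + w) \<partial>\<mu>) + (1 - p) * (\<integral>y. ?I (y + - w) \<partial>\<mu>)"
      by (simp only: ac_simps)
    also have "(\<integral>y. ?I (y + - w) \<partial>\<mu>) = measure \<mu> {x + w<..}"
      using integral_indicator_Ioi_translate[OF \<mu>(2), of x "- w"] by simp
    finally show "(\<integral>q. ?I (?h (w, q)) \<partial>(?B \<Otimes>\<^sub>M \<mu>))
        = p * (\<integral>y. ?I (y + w) \<partial>\<mu>) + (1 - p) * measure \<mu> {x + w<..}" .
  qed
  finally show ?thesis .
qed

lemma stationary_dist_tail_equation:
  fixes \<mu> W :: "real measure"
  assumes \<mu>: "prob_space \<mu>" "sets \<mu> = sets borel" and p: "0 \<le> p" "p \<le> 1"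
    and W: "stationary_dist \<mu> p W" and x: "0 \<le> x"
  shows "measure W {x<..} =
    p * (\<integral>y. measure W {x - y<..} \<partial>\<mu>) + (1 - p) * (\<integral>w. measure \<mu> {x + w<..} \<partial>W)"
proof -
  let ?I = "indicator {x<..} :: real \<Rightarrow> real"
  note W_prob = stationary_distD(1)[OF W] and W_sets = stationary_distD(2)[OF W]
  have pair_sets: "sets (W \<Otimes>\<^sub>M \<mu>) = sets (borel \<Otimes>\<^sub>M borel)"
    using W_sets \<mu>(2) by (intro sets_pair_measure_cong)
  have I_meas: "(\<lambda>(w, y). ?I (y + w)) \<in> borel_measurable (W \<Otimes>\<^sub>M \<mu>)"
    unfolding measurable_cong_sets[OF pair_sets refl] by measurable
  have I_bound: "\<bar>?I t\<bar> \<le> 1" for t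
    by simp
  have "integrable W (\<lambda>w. \<integral>y. ?I (y + w) \<partial>\<mu>)"
    using Fubini_integral_bounded(1)[OF W_prob \<mu>(1) I_meas I_bound] by simp
  then have "measure W {x<..} = p * (\<integral>w. (\<integral>y. ?I (y + w) \<partial>\<mu>) \<partial>W)
      + (1 - p) * (\<integral>w. measure \<mu> {x + w<..} \<partial>W)"
    using stationary_dist_tail_eq_integral[OF \<mu> p W x]
      integrable_measure_Ioi_translate[OF W_prob W_sets \<mu>]
    by simp
  also have "(\<integral>w. (\<integral>y. ?I (y + w) \<partial>\<mu>) \<partial>W) = (\<integral>y. (\<integral>w. ?I (y + w) \<partial>W) \<partial>\<mu>)"
    using Fubini_integral_bounded(2)[OF W_prob \<mu>(1) I_meas I_bound] by simp
  also have "\<dots> = (\<integral>y. measure W {x - y<..} \<partial>\<mu>)"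
  proof -
    have "(\<integral>w. ?I (y + w) \<partial>W) = measure W {x - y<..}" for y
      using integral_indicator_Ioi_translate[OF W_sets, of x y] by (simp add: add.commute)
    then show ?thesis by simp
  qed
  finally show ?thesis .
qed

lemma stationary_dist_tail_le:
  fixes \<mu> W V :: "real measure"
  assumes \<mu>: "prob_space \<mu>" "sets \<mu> = sets borel" and p: "0 \<le> p" "p < 1"
    and W: "stationary_dist \<mu> p W"
    and V: "prob_space V" "sets V = sets borel" "AE t in V. 0 \<le> t"
    and V_eq: "\<And>x. 0 \<le> x \<Longrightarrow>
      measure V {x<..} = p * (\<integral>y. measure V {x - y<..} \<partial>\<mu>) + (1 - p) * measure \<mu> {x<..}"
  shows "measure W {x<..} \<le> measure V {x<..}"
proof (rule measure_Ioi_le_by_renewal_comparison[OF \<mu> p stationary_distD[OF W] V])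
  interpret W: prob_space W by (rule stationary_distD[OF W])
  interpret mu: prob_space \<mu> by fact
  fix x :: real
  assume x: "0 \<le> x"
  have "(\<integral>w. measure \<mu> {x + w<..} \<partial>W) \<le> (\<integral>w. measure \<mu> {x<..} \<partial>W)"
  proof (rule integral_mono_AE)
    show "integrable W (\<lambda>w. measure \<mu> {x + w<..})"
      by (rule integrable_measure_Ioi_translate[OF stationary_distD[OF W] \<mu>])
    show "AE w in W. measure \<mu> {x + w<..} \<le> measure \<mu> {x<..}"
      using stationary_dist_AE_nonneg[OF \<mu>(2) W]
      by eventually_elim (auto intro!: mu.finite_measure_mono simp: \<mu>(2))
  qed simp
  then have "(1 - p) * (\<integral>w. measure \<mu> {x + w<..} \<partial>W) \<le> (1 - p) * measure \<mu> {x<..}"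
    using p by (intro mult_left_mono) (auto simp: W.prob_space)
  then show "measure W {x<..} - p * (\<integral>y. measure W {x - y<..} \<partial>\<mu>)
      \<le> measure V {x<..} - p * (\<integral>y. measure V {x - y<..} \<partial>\<mu>)"
    using stationary_dist_tail_equation[OF \<mu> p(1) _ W x] V_eq[OF x] p by simp
qed

lemma stationary_dist_tail_ge:
  fixes \<mu> W U :: "real measure"
  assumes \<mu>: "prob_space \<mu>" "sets \<mu> = sets borel" and p: "0 \<le> p" "p < 1"
    and W: "stationary_dist \<mu> p W"
    and U: "prob_space U" "sets U = sets borel"
    and U_eq: "\<And>x. 0 \<le> x \<Longrightarrow> measure U {x<..} =
      p * (\<integral>y. measure U {x - y<..} \<partial>\<mu>) + (1 - p) * (\<integral>w. measure \<mu> {x + w<..} \<partial>W)"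
  shows "measure U {x<..} \<le> measure W {x<..}"
  using U_eq stationary_dist_tail_equation[OF \<mu> p(1) _ W] p
  by (intro measure_Ioi_le_by_renewal_comparison[OF \<mu> p U stationary_distD[OF W]]
      stationary_dist_AE_nonneg[OF \<mu>(2) W]) simp_all

fun max_psum :: "(nat \<Rightarrow> real) \<Rightarrow> nat \<Rightarrow> nat \<Rightarrow> real" where
  "max_psum z m 0 = 0"
| "max_psum z m (Suc n) = max 0 (z (Suc m) + max_psum z (Suc m) n)"

lemma max_psum_cong:
  "(\<And>j. m < j \<Longrightarrow> j \<le> m + n \<Longrightarrow> z j = z' j) \<Longrightarrow> max_psum z m n = max_psum z' m n"
proof (induction n arbitrary: m)
  case (Suc n)
  have "max_psum z (Suc m) n = max_psum z' (Suc m) n"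
    by (rule Suc.IH) (use Suc.prems in auto)
  moreover have "z (Suc m) = z' (Suc m)"
    by (rule Suc.prems) auto
  ultimately show ?case by simp
qed simp

lemma max_psum_nonneg: "0 \<le> max_psum z m n"
  by (cases n) auto

lemma Max_partial_sums_eq_max_psum:
  "Max ((\<lambda>i. \<Sum>j\<in>{m + 1..m + i}. z j) ` {0..n}) = max_psum z m n"
proof (induction n arbitrary: m)
  case (Suc n)
  have shift: "(\<Sum>j\<in>{m + 1..m + Suc i}. z j) = (\<Sum>j\<in>{Suc m + 1..Suc m + i}. z j) + z (Suc m)" for i
    by (subst sum.atLeast_Suc_atMost) auto
  have range: "{0..Suc n} = insert 0 (Suc ` {0..n})"
    by (auto simp: image_iff)
  have "(\<lambda>i. \<Sum>j\<in>{m + 1..m + i}. z j) ` {0..Suc n}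
      = insert 0 ((\<lambda>i. (\<Sum>j\<in>{Suc m + 1..Suc m + i}. z j) + z (Suc m)) ` {0..n})"
    unfolding range image_insert image_image shift by simp
  then have "Max ((\<lambda>i. \<Sum>j\<in>{m + 1..m + i}. z j) ` {0..Suc n})
      = max 0 (Max ((\<lambda>i. \<Sum>j\<in>{Suc m + 1..Suc m + i}. z j) ` {0..n}) + z (Suc m))"
    by (simp add: Max_add_commute)
  also have "\<dots> = max_psum z m (Suc n)"
    using Suc.IH[of "Suc m"] by simp
  finally show ?case .
qed simp

lemma runmax_eq_max_psum: "runmax X n \<omega> = max_psum (\<lambda>j. X j \<omega>) 0 n"
  using Max_partial_sums_eq_max_psum[where m = 0 and z = "\<lambda>j. X j \<omega>" and n = n]
  by (simp add: runmax_def psum_def)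

lemma measurable_max_psum:
  assumes "\<And>j. m < j \<Longrightarrow> j \<le> m + n \<Longrightarrow> (\<lambda>\<omega>. z \<omega> j) \<in> borel_measurable M"
  shows "(\<lambda>\<omega>. max_psum (z \<omega>) m n) \<in> borel_measurable M"
  using assms
proof (induction n arbitrary: m)
  case (Suc n)
  have "(\<lambda>\<omega>. max_psum (z \<omega>) (Suc m) n) \<in> borel_measurable M"
    by (rule Suc.IH) (use Suc.prems in auto)
  moreover have "(\<lambda>\<omega>. z \<omega> (Suc m)) \<in> borel_measurable M"
    by (rule Suc.prems) auto
  ultimately show ?case
    by simp
qed simp

lemma (in prob_space) indep_var_max_psum:
  fixes Y :: "nat option \<Rightarrow> 'a \<Rightarrow> real"
  assumes indep: "indep_vars (\<lambda>_. borel) Y UNIV" and j: "j \<notin> Some ` {m<..m + n}"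
  shows "indep_var borel (Y j) borel (\<lambda>\<omega>. max_psum (\<lambda>i. Y (Some i) \<omega>) m n)"
proof -
  let ?B = "Some ` {m<..m + n}"
  have "indep_var (PiM {j} (\<lambda>_. borel)) (\<lambda>\<omega>. restrict (\<lambda>i. Y i \<omega>) {j})
      (PiM ?B (\<lambda>_. borel)) (\<lambda>\<omega>. restrict (\<lambda>i. Y i \<omega>) ?B)"
    using j by (intro indep_var_restrict[OF indep]) auto
  then have "indep_var borel ((\<lambda>v. v j) \<circ> (\<lambda>\<omega>. restrict (\<lambda>i. Y i \<omega>) {j}))
      borel ((\<lambda>v. max_psum (\<lambda>i. v (Some i)) m n) \<circ> (\<lambda>\<omega>. restrict (\<lambda>i. Y i \<omega>) ?B))"
    by (rule indep_var_compose) (auto intro!: measurable_max_psum measurable_component_singleton)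
  also have "(\<lambda>v. v j) \<circ> (\<lambda>\<omega>. restrict (\<lambda>i. Y i \<omega>) {j}) = Y j"
    by (auto simp: fun_eq_iff)
  also have "(\<lambda>v. max_psum (\<lambda>i. v (Some i)) m n) \<circ> (\<lambda>\<omega>. restrict (\<lambda>i. Y i \<omega>) ?B)
      = (\<lambda>\<omega>. max_psum (\<lambda>i. Y (Some i) \<omega>) m n)"
    by (auto simp: fun_eq_iff intro!: max_psum_cong)
  finally show ?thesis .
qed

locale geometric_runmax = prob_space M for M :: "'a measure" +
  fixes \<mu> :: "real measure" and p :: real and X :: "nat \<Rightarrow> 'a \<Rightarrow> real" and N :: "'a \<Rightarrow> nat"
  assumes sets_\<mu>: "sets \<mu> = sets borel"
    and p: "0 \<le> p" "p < 1"
    and X_rv: "\<And>i. X i \<in> borel_measurable M"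
    and X_distr: "\<And>i. distr M borel (X i) = \<mu>"
    and N_rv: "N \<in> measurable M (count_space UNIV)"
    and N_distr: "\<And>k. prob {\<omega> \<in> space M. N \<omega> = k} = (1 - p) * p ^ k"
    and indep: "indep_vars (\<lambda>_. borel)
      (\<lambda>j. case j of None \<Rightarrow> (\<lambda>\<omega>. real (N \<omega>)) | Some i \<Rightarrow> X i) UNIV"
begin

definition law_max_psum :: "nat \<Rightarrow> nat \<Rightarrow> real measure" where
  "law_max_psum m n = distr M borel (\<lambda>\<omega>. max_psum (\<lambda>j. X j \<omega>) m n)"

lemma prob_space_\<mu>: "prob_space \<mu>"
  using prob_space_distr[OF X_rv[of 0]] by (simp add: X_distr)

lemma max_psum_rv: "(\<lambda>\<omega>. max_psum (\<lambda>j. X j \<omega>) m n) \<in> borel_measurable M"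
  by (rule measurable_max_psum) (simp add: X_rv)

lemma prob_space_law_max_psum: "prob_space (law_max_psum m n)"
  unfolding law_max_psum_def by (rule prob_space_distr[OF max_psum_rv])

lemma sets_law_max_psum [simp]: "sets (law_max_psum m n) = sets borel"
  by (simp add: law_max_psum_def)

lemma law_max_psum_Suc:
  "law_max_psum m (Suc n) = distr (\<mu> \<Otimes>\<^sub>M law_max_psum (Suc m) n) borel (\<lambda>(a, b). max 0 (a + b))"
proof -
  let ?R = "\<lambda>\<omega>. max_psum (\<lambda>j. X j \<omega>) (Suc m) n"
  have not_in: "Some (Suc m) \<notin> Some ` {Suc m<..Suc m + n}"
    by auto
  have "indep_var borel (X (Suc m)) borel ?R"
    using indep_var_max_psum[OF indep not_in] by simp
  then have joint: "distr M (borel \<Otimes>\<^sub>M borel) (\<lambda>\<omega>. (X (Suc m) \<omega>, ?R \<omega>)) = \<mu> \<Otimes>\<^sub>M law_max_psum (Suc m) n"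
    by (simp add: indep_var_distribution_eq X_distr law_max_psum_def)
  have "law_max_psum m (Suc n)
      = distr M borel ((\<lambda>(a, b). max 0 (a + b)) \<circ> (\<lambda>\<omega>. (X (Suc m) \<omega>, ?R \<omega>)))"
    by (simp add: law_max_psum_def comp_def)
  also have "\<dots> = distr (distr M (borel \<Otimes>\<^sub>M borel) (\<lambda>\<omega>. (X (Suc m) \<omega>, ?R \<omega>))) borel
      (\<lambda>(a, b). max 0 (a + b))"
    using X_rv max_psum_rv by (intro distr_distr[symmetric]) measurable
  finally show ?thesis
    unfolding joint .
qed

lemma law_max_psum_shift: "law_max_psum m n = law_max_psum 0 n"
proof (induction n arbitrary: m)
  case (Suc n)
  show ?case
    unfolding law_max_psum_Suc Suc.IH[of "Suc m"] Suc.IH[of "Suc 0"] ..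
qed (simp add: law_max_psum_def)

lemma tail_law_max_psum_Suc:
  assumes x: "0 \<le> x"
  shows "measure (law_max_psum 0 (Suc n)) {x<..} = (\<integral>y. measure (law_max_psum 0 n) {x - y<..} \<partial>\<mu>)"
proof -
  let ?L = "law_max_psum 0 n"
  let ?I = "indicator {x<..} :: real \<Rightarrow> real"
  interpret mu: prob_space \<mu> by (rule prob_space_\<mu>)
  interpret L: prob_space ?L by (rule prob_space_law_max_psum)
  interpret pair_prob_space \<mu> ?L ..
  have sum_meas: "(\<lambda>(a, b). max 0 (a + b)) \<in> borel_measurable (\<mu> \<Otimes>\<^sub>M ?L)"
    unfolding measurable_cong_sets[OF sets_pair_measure_cong[OF sets_\<mu> sets_law_max_psum] refl]
    by measurable
  have "measure (law_max_psum 0 (Suc n)) {x<..} = (\<integral>t. ?I t \<partial>law_max_psum 0 (Suc n))"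
    using integral_indicator_Ioi_translate[OF sets_law_max_psum, where x = x and c = 0] by simp
  also have "\<dots> = (\<integral>z. ?I (case z of (a, b) \<Rightarrow> max 0 (a + b)) \<partial>(\<mu> \<Otimes>\<^sub>M ?L))"
    unfolding law_max_psum_Suc law_max_psum_shift[of "Suc 0"] using sum_meas
    by (intro integral_distr) auto
  also have "\<dots> = (\<integral>a. (\<integral>b. ?I (max 0 (a + b)) \<partial>?L) \<partial>\<mu>)"
  proof -
    have "integrable (\<mu> \<Otimes>\<^sub>M ?L) (\<lambda>z. ?I (case z of (a, b) \<Rightarrow> max 0 (a + b)))"
      using sum_meas
      by (intro prob_space.integrable_bounded[OF prob_space_pair])
        (auto intro: mu.prob_space_axioms L.prob_space_axioms)
    from integral_fst'[OF this] show ?thesis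
      by simp
  qed
  also have "\<dots> = (\<integral>a. measure ?L {x - a<..} \<partial>\<mu>)"
  proof -
    have "(\<integral>b. ?I (max 0 (a + b)) \<partial>?L) = measure ?L {x - a<..}" for a
      using integral_indicator_Ioi_translate[OF sets_law_max_psum, where x = x and c = a]
      by (simp add: max.commute[of 0] indicator_Ioi_max_0[OF x] add.commute)
    then show ?thesis by simp
  qed
  finally show ?thesis .
qed

lemma tail_law_max_psum_Suc_0:
  assumes x: "0 \<le> x"
  shows "measure (law_max_psum 0 (Suc 0)) {x<..} = measure \<mu> {x<..}"
proof -
  have "measure (law_max_psum 0 0) {z<..} = indicator {x<..} (x - z + 0)" for z
    by (simp add: law_max_psum_def measure_return indicator_def)
  then show ?thesis
    using tail_law_max_psum_Suc[OF x, of 0]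
      integral_indicator_Ioi_translate[OF sets_\<mu>, of x 0]
    by simp
qed

lemma runmax_rv: "(\<lambda>\<omega>. runmax X (N \<omega> + 1) \<omega>) \<in> borel_measurable M"
  unfolding runmax_eq_max_psum
  by (rule measurable_compose_countable[OF max_psum_rv N_rv])

lemma tail_runmax_sums:
  "(\<lambda>k. (1 - p) * p ^ k * measure (law_max_psum 0 (Suc k)) {x<..})
    sums measure (distr M borel (\<lambda>\<omega>. runmax X (N \<omega> + 1) \<omega>)) {x<..}"
proof -
  define E where "E k = {\<omega> \<in> space M. N \<omega> = k \<and> x < max_psum (\<lambda>j. X j \<omega>) 0 (Suc k)}" for k
  have E_sets: "E k \<in> events" for k
    using N_rv max_psum_rv unfolding E_def by measurable
  have "disjoint_family E"
    by (auto simp: disjoint_family_on_def E_def)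
  then have "(\<lambda>k. prob (E k)) sums prob (\<Union>k. E k)"
    using E_sets by (intro finite_measure_UNION) auto
  moreover have "(\<Union>k. E k) = {\<omega> \<in> space M. x < runmax X (N \<omega> + 1) \<omega>}"
    by (auto simp: E_def runmax_eq_max_psum)
  moreover have "prob (E k) = (1 - p) * p ^ k * measure (law_max_psum 0 (Suc k)) {x<..}" for k
  proof -
    let ?R = "\<lambda>\<omega>. max_psum (\<lambda>j. X j \<omega>) 0 (Suc k)"
    have "indep_var borel (\<lambda>\<omega>. real (N \<omega>)) borel ?R"
      using indep_var_max_psum[OF indep, of None 0 "Suc k"] by simp
    then have "prob ((\<lambda>\<omega>. (real (N \<omega>), ?R \<omega>)) -` ({real k} \<times> {x<..}) \<inter> space M)
        = prob ((\<lambda>\<omega>. real (N \<omega>)) -` {real k} \<inter> space M) * prob (?R -` {x<..} \<inter> space M)"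
      by (rule indep_varD) auto
    moreover have "(\<lambda>\<omega>. (real (N \<omega>), ?R \<omega>)) -` ({real k} \<times> {x<..}) \<inter> space M = E k"
      by (auto simp: E_def)
    moreover have "(\<lambda>\<omega>. real (N \<omega>)) -` {real k} \<inter> space M = {\<omega> \<in> space M. N \<omega> = k}"
      by auto
    moreover have "prob (?R -` {x<..} \<inter> space M) = measure (law_max_psum 0 (Suc k)) {x<..}"
      unfolding law_max_psum_def by (rule measure_distr[OF max_psum_rv, symmetric]) simp
    ultimately show ?thesis
      by (simp add: N_distr)
  qed
  ultimately show ?thesis
    using measure_distr_Ioi[OF runmax_rv] by simp
qed

lemma AE_runmax_nonneg: "AE t in distr M borel (\<lambda>\<omega>. runmax X (N \<omega> + 1) \<omega>). 0 \<le> t"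
  using runmax_rv by (subst AE_distr_iff) (auto simp: runmax_eq_max_psum max_psum_nonneg)

lemma runmax_tail_renewal_equation:
  defines "V \<equiv> distr M borel (\<lambda>\<omega>. runmax X (N \<omega> + 1) \<omega>)"
  assumes x: "0 \<le> x"
  shows "measure V {x<..} = p * (\<integral>y. measure V {x - y<..} \<partial>\<mu>) + (1 - p) * measure \<mu> {x<..}"
proof -
  have "measure V {x<..} = p * (\<integral>y. measure V {x - y<..} \<partial>\<mu>)
      + (1 - p) * measure (law_max_psum 0 1) {x<..}"
  proof (rule geometric_mixture_renewal_equation[OF prob_space_\<mu> sets_\<mu> p, where
        a = "\<lambda>k z. measure (law_max_psum 0 k) {z<..}"])
    show "(\<lambda>z. measure (law_max_psum 0 k) {z<..}) \<in> borel_measurable borel" for k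
      by (rule borel_measurable_measure_Ioi[OF prob_space_law_max_psum sets_law_max_psum])
    show "\<bar>measure (law_max_psum 0 k) {z<..}\<bar> \<le> 1" for k z
      using prob_space.prob_le_1[OF prob_space_law_max_psum] by simp
  qed (use tail_law_max_psum_Suc tail_runmax_sums x in \<open>simp_all add: V_def\<close>)
  then show ?thesis
    unfolding One_nat_def tail_law_max_psum_Suc_0[OF x] .
qed

end

theorem lemma3p1:
  fixes M :: "'a measure" and \<mu> W :: "real measure" and p :: real
    and X :: "nat \<Rightarrow> 'a \<Rightarrow> real" and N :: "'a \<Rightarrow> nat" and W' :: "'a \<Rightarrow> real"
  assumes M: "prob_space M"
    and mu: "prob_space \<mu>" "sets \<mu> = sets borel"
    and neg: "measure \<mu> {..<0} > 0"
    and p: "0 \<le> p" "p < 1"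
    and Xrv: "\<And>i. X i \<in> borel_measurable M"
    and Xdist: "\<And>i. distr M borel (X i) = \<mu>"
    and Nrv: "N \<in> measurable M (count_space UNIV)"
    and Ndist: "\<And>k. measure M {\<omega> \<in> space M. N \<omega> = k} = (1 - p) * p ^ k"
    and indep: "prob_space.indep_vars M (\<lambda>_. borel)
                  (\<lambda>j. case j of None \<Rightarrow> (\<lambda>\<omega>. real (N \<omega>)) | Some i \<Rightarrow> X i) UNIV"
    and W: "stationary_dist \<mu> p W"
    and W'dist: "distr M borel W' = W"
    and W'indep: "prob_space.indep_var M borel (\<lambda>\<omega>. runmax X (N \<omega> + 1) \<omega>) borel W'"
  shows "(\<forall>x. measure W {x<..} \<le> measure M {\<omega> \<in> space M. runmax X (N \<omega> + 1) \<omega> > x}) \<and>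
         (\<forall>x. measure M {\<omega> \<in> space M. runmax X (N \<omega> + 1) \<omega> - W' \<omega> > x} \<le> measure W {x<..})"
proof -
  interpret geometric_runmax M \<mu> p X N
    using M mu(2) p Xrv Xdist Nrv Ndist indep
    by (intro geometric_runmax.intro geometric_runmax_axioms.intro)
  define V where "V = distr M borel (\<lambda>\<omega>. runmax X (N \<omega> + 1) \<omega>)"
  define U where "U = distr M borel (\<lambda>\<omega>. runmax X (N \<omega> + 1) \<omega> - W' \<omega>)"
  have diff_rv: "(\<lambda>\<omega>. runmax X (N \<omega> + 1) \<omega> - W' \<omega>) \<in> borel_measurable M"
    using runmax_rv indep_var_rv2[OF W'indep] by measurable
  have V: "prob_space V" "sets V = sets borel"
    unfolding V_def using prob_space_distr[OF runmax_rv] by simp_all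
  have U: "prob_space U" "sets U = sets borel"
    unfolding U_def using prob_space_distr[OF diff_rv] by simp_all
  have V_eq: "measure V {x<..} = p * (\<integral>y. measure V {x - y<..} \<partial>\<mu>) + (1 - p) * measure \<mu> {x<..}"
    if "0 \<le> x" for x
    unfolding V_def using that by (rule runmax_tail_renewal_equation)
  have U_tail: "measure U {x<..} = (\<integral>w. measure V {x + w<..} \<partial>W)" for x
    using measure_Ioi_diff_indep[OF W'indep] by (simp add: U_def V_def W'dist)
  have upper: "measure W {x<..} \<le> measure V {x<..}" for x
    by (rule stationary_dist_tail_le[OF mu p W V AE_runmax_nonneg[folded V_def] V_eq])
  have lower: "measure U {x<..} \<le> measure W {x<..}" for x
    using mixture_renewal_equation[OF mu V stationary_distD[OF W]
        stationary_dist_AE_nonneg[OF mu(2) W] V_eq U_tail]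
    by (rule stationary_dist_tail_ge[OF mu p W U])
  show ?thesis
    using upper lower measure_distr_Ioi[OF runmax_rv] measure_distr_Ioi[OF diff_rv]
    by (simp add: V_def U_def)
qed

end
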